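(* Let $(X,\mathcal{B},\mu,G)$ be a measure-preserving system and $S\subset G$. Then the map $\mathfrak{P}\to[0,\infty)$, $\alpha\mapsto h^*_{\mu,S}(\alpha)$, is continuous with respect to the Rokhlin metric $\rho$. In particular, $\{\alpha\in\mathfrak{P}\colon h^*_{\mu,S}(\alpha)=0\}$ is closed in $(\mathfrak{P},\rho)$.
   Context: $(X,\mathcal{B},\mu)$ is a standard probability space and the discrete group $G$ acts measurably and preserves $\mu$. $\mathfrak{P}$ is the set of finite measurable partitions of $X$ (identified mod $0$); $g^{-1}\alpha=\{g^{-1}A\colon A\in\alpha\}$. $H_\mu(\alpha)=-\sum_{A\in\alpha}\mu(A)\log\mu(A)$, $H_\mu(\alpha|\beta)=\sum_{B\in\beta}\mu(B)\sum_{A\in\alpha}-\mu(A|B)\log\mu(A|B)$ with $\mu(A|B)=\mu(A\cap B)/\mu(B)$ ($0$ if $\mu(B)=0$); $\rho(\alpha,\beta)=H_\mu(\alpha|\beta)+H_\mu(\beta|\alpha)$. $h^*_{\mu,S}(\alpha)=\limsup_n\frac1n\sup_{\alpha_1,\dots,\alpha_n\in\{g^{-1}\alpha\colon g\in S\}}H_\mu(\bigvee_{i=1}^n\alpha_i)$. *)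

theory Defs
  imports "HOL-Probability.Probability" "HOL-Algebra.Group_Action"
begin

text \<open>Finite measurable partitions of the space of a measure M (exact partitions;
  null and empty cells are allowed, so "mod 0" identification is handled by the
  Rokhlin pseudometric, for which rho(alpha,beta)=0 iff alpha = beta mod 0).\<close>
definition fin_partitions :: "'a measure \<Rightarrow> 'a set set set" where
  "fin_partitions M = {\<alpha>. finite \<alpha> \<and> \<alpha> \<subseteq> sets M \<and> disjoint \<alpha> \<and> \<Union>\<alpha> = space M}"

definition pjoin :: "'a set set \<Rightarrow> 'a set set \<Rightarrow> 'a set set" where
  "pjoin \<alpha> \<beta> = {A \<inter> B | A B. A \<in> \<alpha> \<and> B \<in> \<beta>}"

definition pjoin_list :: "'a measure \<Rightarrow> 'a set set list \<Rightarrow> 'a set set" where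
  "pjoin_list M as = foldr pjoin as {space M}"

definition pull :: "'a measure \<Rightarrow> ('a \<Rightarrow> 'a) \<Rightarrow> 'a set set \<Rightarrow> 'a set set" where
  "pull M T \<alpha> = {T -` A \<inter> space M | A. A \<in> \<alpha>}"

definition pentropy :: "'a measure \<Rightarrow> 'a set set \<Rightarrow> real" where
  "pentropy M \<alpha> = (\<Sum>A\<in>\<alpha>. - (measure M A * ln (measure M A)))"

definition cond_meas :: "'a measure \<Rightarrow> 'a set \<Rightarrow> 'a set \<Rightarrow> real" where
  "cond_meas M A B = (if measure M B = 0 then 0 else measure M (A \<inter> B) / measure M B)"

definition cond_pentropy :: "'a measure \<Rightarrow> 'a set set \<Rightarrow> 'a set set \<Rightarrow> real" where
  "cond_pentropy M \<alpha> \<beta> =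
     (\<Sum>B\<in>\<beta>. measure M B * (\<Sum>A\<in>\<alpha>. - (cond_meas M A B * ln (cond_meas M A B))))"

definition rokhlin :: "'a measure \<Rightarrow> 'a set set \<Rightarrow> 'a set set \<Rightarrow> real" where
  "rokhlin M \<alpha> \<beta> = cond_pentropy M \<alpha> \<beta> + cond_pentropy M \<beta> \<alpha>"

text \<open>Valued in ereal so that the supremum is
  always defined (it is finite, in [0, n log |alpha|], whenever S is nonempty).\<close>
definition hstar :: "'a measure \<Rightarrow> ('g \<Rightarrow> 'a \<Rightarrow> 'a) \<Rightarrow> 'g set \<Rightarrow> 'a set set \<Rightarrow> ereal" where
  "hstar M act S \<alpha> = limsup (\<lambda>n::nat. ereal (1 / real n) *
      (SUP as \<in> {as. length as = n \<and> set as \<subseteq> (\<lambda>g. pull M (act g) \<alpha>) ` S}.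
          ereal (pentropy M (pjoin_list M as))))"

end

theory Submission
  imports Defs
begin

text \<open>
  Let \<open>T\<^sub>1, \<dots>, T\<^sub>n\<close> be measure-preserving maps and \<open>\<alpha>, \<beta>\<close> finite partitions. Conditional
  entropy is subadditive in the partition on the left, decreases when the partition on the right
  is refined, and is invariant under measure-preserving maps; hence the join of the
  \<open>T\<^sub>i\<^sup>-\<^sup>1 \<alpha>\<close> has conditional entropy at most \<open>n H(\<alpha>|\<beta>)\<close> given the join of the \<open>T\<^sub>i\<^sup>-\<^sup>1 \<beta>\<close>, and so
  its entropy exceeds that of the latter by at most \<open>n H(\<alpha>|\<beta>)\<close>. Dividing by \<open>n\<close>, taking the
  supremum over all choices of the \<open>T\<^sub>i\<close> among the \<open>g \<in> S\<close> and the limsup gives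
  \<open>h\<^sup>*(\<alpha>) \<le> h\<^sup>*(\<beta>) + H(\<alpha>|\<beta>)\<close>, so \<open>h\<^sup>*\<close> is 1-Lipschitz for the Rokhlin metric.
\<close>

lemma log_sum_inequality:
  fixes a b :: "'i \<Rightarrow> real"
  assumes fin: "finite I" and a0: "\<And>i. i \<in> I \<Longrightarrow> 0 \<le> a i" and ab: "\<And>i. i \<in> I \<Longrightarrow> a i \<le> b i"
  shows "(\<Sum>i\<in>I. a i) * ln ((\<Sum>i\<in>I. a i) / (\<Sum>i\<in>I. b i)) \<le> (\<Sum>i\<in>I. a i * ln (a i / b i))"
proof -
  define A where "A = (\<Sum>i\<in>I. a i)"
  define B where "B = (\<Sum>i\<in>I. b i)"
  have "0 \<le> A" unfolding A_def using a0 by (simp add: sum_nonneg)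
  have "A \<le> B" unfolding A_def B_def using ab by (simp add: sum_mono)
  show ?thesis
  proof (cases "A = 0")
    case True
    then have "\<forall>i\<in>I. a i = 0" using sum_nonneg_eq_0_iff[OF fin] a0 unfolding A_def by blast
    then show ?thesis using True by (simp add: A_def)
  next
    case False
    with \<open>0 \<le> A\<close> \<open>A \<le> B\<close> have "A > 0" "B > 0" by auto
    \<comment> \<open>\<open>ln t \<le> t - 1\<close> with \<open>t = (b\<^sub>i A) / (a\<^sub>i B)\<close>\<close>
    have termwise: "a i * ln (A / B) \<le> a i * ln (a i / b i) + (b i * A / B - a i)" if i: "i \<in> I" for i
    proof (cases "a i = 0")
      case True
      then show ?thesis using ab[OF i] \<open>A > 0\<close> \<open>B > 0\<close> by simp
    next
      case False
      then have "a i > 0" using a0[OF i] by simp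
      then have "b i > 0" using ab[OF i] by simp
      define t where "t = b i * A / (a i * B)"
      have "t > 0" unfolding t_def using \<open>a i > 0\<close> \<open>b i > 0\<close> \<open>A > 0\<close> \<open>B > 0\<close> by simp
      have "ln t = ln (A / B) - ln (a i / b i)"
        unfolding t_def using \<open>a i > 0\<close> \<open>b i > 0\<close> \<open>A > 0\<close> \<open>B > 0\<close> by (simp add: ln_div ln_mult)
      with ln_le_minus_one[OF \<open>t > 0\<close>] \<open>a i > 0\<close>
      have "a i * (ln (A / B) - ln (a i / b i)) \<le> a i * (t - 1)" by simp
      moreover have "a i * (t - 1) = b i * A / B - a i"
        unfolding t_def using \<open>a i > 0\<close> \<open>B > 0\<close> by (simp add: field_simps)
      ultimately show ?thesis by (simp add: algebra_simps)
    qed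
    have "A * ln (A / B) = (\<Sum>i\<in>I. a i * ln (A / B))"
      by (simp add: A_def sum_distrib_right)
    also have "\<dots> \<le> (\<Sum>i\<in>I. a i * ln (a i / b i) + (b i * A / B - a i))"
      using termwise by (rule sum_mono)
    also have "\<dots> = (\<Sum>i\<in>I. a i * ln (a i / b i)) + (B * A / B - A)"
      by (simp add: sum.distrib sum_subtractf A_def B_def sum_divide_distrib[symmetric]
          sum_distrib_right[symmetric])
    also have "\<dots> = (\<Sum>i\<in>I. a i * ln (a i / b i))" using \<open>B > 0\<close> by simp
    finally show ?thesis by (simp add: A_def B_def)
  qed
qed

section \<open>Finite partitions\<close>

definition measure_preserving :: "'a measure \<Rightarrow> ('a \<Rightarrow> 'a) \<Rightarrow> bool" where
  "measure_preserving M T \<longleftrightarrow> T \<in> measurable M M \<and> distr M M T = M"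

lemma fin_partitionsD:
  assumes "\<alpha> \<in> fin_partitions M"
  shows "finite \<alpha>" "\<alpha> \<subseteq> sets M" "disjoint \<alpha>" "\<Union>\<alpha> = space M"
  using assms unfolding fin_partitions_def by auto

lemma pjoin_image: "pjoin \<alpha> \<beta> = (\<lambda>(A, B). A \<inter> B) ` (\<alpha> \<times> \<beta>)"
  unfolding pjoin_def by auto

lemma pull_image: "pull M T \<alpha> = (\<lambda>A. T -` A \<inter> space M) ` \<alpha>"
  unfolding pull_def by auto

lemma pjoin_commute: "pjoin \<alpha> \<beta> = pjoin \<beta> \<alpha>"
  unfolding pjoin_def by (auto simp: Int_commute)

lemma pjoin_assoc: "pjoin (pjoin \<alpha> \<beta>) \<gamma> = pjoin \<alpha> (pjoin \<beta> \<gamma>)"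
proof (intro equalityI subsetI)
  fix D assume "D \<in> pjoin (pjoin \<alpha> \<beta>) \<gamma>"
  then obtain A B C where "A \<in> \<alpha>" "B \<in> \<beta>" "C \<in> \<gamma>" "D = A \<inter> (B \<inter> C)"
    unfolding pjoin_def by (auto simp: Int_assoc)
  then show "D \<in> pjoin \<alpha> (pjoin \<beta> \<gamma>)" unfolding pjoin_def by blast
next
  fix D assume "D \<in> pjoin \<alpha> (pjoin \<beta> \<gamma>)"
  then obtain A B C where "A \<in> \<alpha>" "B \<in> \<beta>" "C \<in> \<gamma>" "D = (A \<inter> B) \<inter> C"
    unfolding pjoin_def by (auto simp flip: Int_assoc)
  then show "D \<in> pjoin (pjoin \<alpha> \<beta>) \<gamma>" unfolding pjoin_def by blast
qed

lemma pjoin_list_Cons: "pjoin_list M (\<alpha> # \<alpha>s) = pjoin \<alpha> (pjoin_list M \<alpha>s)"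
  unfolding pjoin_list_def by simp

lemma pull_pjoin: "pull M T (pjoin \<alpha> \<beta>) = pjoin (pull M T \<alpha>) (pull M T \<beta>)"
proof (intro equalityI subsetI)
  fix D assume "D \<in> pull M T (pjoin \<alpha> \<beta>)"
  then obtain A B where "A \<in> \<alpha>" "B \<in> \<beta>" "D = (T -` A \<inter> space M) \<inter> (T -` B \<inter> space M)"
    unfolding pjoin_def pull_def by auto
  then show "D \<in> pjoin (pull M T \<alpha>) (pull M T \<beta>)" unfolding pjoin_def pull_def by blast
next
  fix D assume "D \<in> pjoin (pull M T \<alpha>) (pull M T \<beta>)"
  then obtain A B where "A \<in> \<alpha>" "B \<in> \<beta>" "D = T -` (A \<inter> B) \<inter> space M"
    unfolding pjoin_def pull_def by auto
  then show "D \<in> pull M T (pjoin \<alpha> \<beta>)" unfolding pjoin_def pull_def by blast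
qed

lemma disjoint_pjoin_cells:
  assumes "disjoint \<alpha>" "disjoint \<beta>" "A \<in> \<alpha>" "A' \<in> \<alpha>" "B \<in> \<beta>" "B' \<in> \<beta>"
    and "(A, B) \<noteq> (A', B')"
  shows "(A \<inter> B) \<inter> (A' \<inter> B') = {}"
proof (cases "A = A'")
  case True
  with assms(7) have "B \<noteq> B'" by simp
  then show ?thesis using disjointD[OF assms(2,5,6)] by blast
next
  case False
  then show ?thesis using disjointD[OF assms(1,3,4)] by blast
qed

lemma space_in_fin_partitions: "{space M} \<in> fin_partitions M"
  unfolding fin_partitions_def by auto

lemma pjoin_in_fin_partitions:
  assumes "\<alpha> \<in> fin_partitions M" "\<beta> \<in> fin_partitions M"
  shows "pjoin \<alpha> \<beta> \<in> fin_partitions M"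
proof -
  note a = fin_partitionsD[OF assms(1)] and b = fin_partitionsD[OF assms(2)]
  have "disjoint (pjoin \<alpha> \<beta>)"
  proof (rule disjointI)
    fix D D' assume "D \<in> pjoin \<alpha> \<beta>" "D' \<in> pjoin \<alpha> \<beta>" "D \<noteq> D'"
    then obtain A B A' B' where "A \<in> \<alpha>" "B \<in> \<beta>" "A' \<in> \<alpha>" "B' \<in> \<beta>" "D = A \<inter> B" "D' = A' \<inter> B'"
      unfolding pjoin_def by blast
    moreover from this \<open>D \<noteq> D'\<close> have "(A, B) \<noteq> (A', B')" by blast
    ultimately show "D \<inter> D' = {}" using disjoint_pjoin_cells[OF a(3) b(3)] by blast
  qed
  moreover have "\<Union>(pjoin \<alpha> \<beta>) = space M"
  proof
    show "\<Union>(pjoin \<alpha> \<beta>) \<subseteq> space M" unfolding pjoin_def using a(4) by auto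
    show "space M \<subseteq> \<Union>(pjoin \<alpha> \<beta>)"
    proof
      fix x assume "x \<in> space M"
      then obtain A B where "A \<in> \<alpha>" "B \<in> \<beta>" "x \<in> A" "x \<in> B" using a(4) b(4) by blast
      then show "x \<in> \<Union>(pjoin \<alpha> \<beta>)" unfolding pjoin_def by blast
    qed
  qed
  moreover have "finite (pjoin \<alpha> \<beta>)" "pjoin \<alpha> \<beta> \<subseteq> sets M"
    using a b by (auto simp: pjoin_image)
  ultimately show ?thesis unfolding fin_partitions_def by blast
qed

lemma pjoin_list_in_fin_partitions:
  "set \<alpha>s \<subseteq> fin_partitions M \<Longrightarrow> pjoin_list M \<alpha>s \<in> fin_partitions M"
  by (induction \<alpha>s)
    (auto simp: pjoin_list_def space_in_fin_partitions intro: pjoin_in_fin_partitions)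

lemma pull_in_fin_partitions:
  assumes "\<alpha> \<in> fin_partitions M" "T \<in> measurable M M"
  shows "pull M T \<alpha> \<in> fin_partitions M"
proof -
  note a = fin_partitionsD[OF assms(1)]
  have "disjoint (pull M T \<alpha>)"
  proof (rule disjointI)
    fix D D' assume "D \<in> pull M T \<alpha>" "D' \<in> pull M T \<alpha>" "D \<noteq> D'"
    then obtain A A' where "A \<in> \<alpha>" "A' \<in> \<alpha>" "A \<noteq> A'"
        "D = T -` A \<inter> space M" "D' = T -` A' \<inter> space M"
      unfolding pull_def by auto
    then show "D \<inter> D' = {}" using disjointD[OF a(3)] by blast
  qed
  moreover have "\<Union>(pull M T \<alpha>) = space M"
  proof
    show "\<Union>(pull M T \<alpha>) \<subseteq> space M" unfolding pull_def by auto
    show "space M \<subseteq> \<Union>(pull M T \<alpha>)"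
    proof
      fix x assume x: "x \<in> space M"
      then obtain A where "A \<in> \<alpha>" "T x \<in> A" using a(4) measurable_space[OF assms(2)] by blast
      then show "x \<in> \<Union>(pull M T \<alpha>)" unfolding pull_def using x by blast
    qed
  qed
  moreover have "finite (pull M T \<alpha>)" "pull M T \<alpha> \<subseteq> sets M"
    using a assms(2) by (auto simp: pull_image)
  ultimately show ?thesis unfolding fin_partitions_def by blast
qed

lemma sum_pjoin:
  assumes "\<alpha> \<in> fin_partitions M" "\<beta> \<in> fin_partitions M" "f {} = 0"
  shows "(\<Sum>D\<in>pjoin \<alpha> \<beta>. f D) = (\<Sum>A\<in>\<alpha>. \<Sum>B\<in>\<beta>. f (A \<inter> B))"
proof -
  note a = fin_partitionsD[OF assms(1)] and b = fin_partitionsD[OF assms(2)]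
  have "(\<Sum>D\<in>pjoin \<alpha> \<beta>. f D) = (\<Sum>(A, B)\<in>\<alpha> \<times> \<beta>. f (A \<inter> B))"
    unfolding pjoin_image
  proof (subst sum.reindex_nontrivial)
    fix p q assume "p \<in> \<alpha> \<times> \<beta>" "q \<in> \<alpha> \<times> \<beta>" "p \<noteq> q"
      and pq: "(case p of (A, B) \<Rightarrow> A \<inter> B) = (case q of (A, B) \<Rightarrow> A \<inter> B)"
    obtain A B where p: "p = (A, B)" "A \<in> \<alpha>" "B \<in> \<beta>" using \<open>p \<in> \<alpha> \<times> \<beta>\<close> by blast
    obtain A' B' where q: "q = (A', B')" "A' \<in> \<alpha>" "B' \<in> \<beta>" using \<open>q \<in> \<alpha> \<times> \<beta>\<close> by blast
    have "(A \<inter> B) \<inter> (A' \<inter> B') = {}"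
      using disjoint_pjoin_cells[OF a(3) b(3)] p q \<open>p \<noteq> q\<close> by blast
    moreover have "A \<inter> B = A' \<inter> B'" using pq p q by simp
    ultimately have "A \<inter> B = {}" by simp
    then show "f (case p of (A, B) \<Rightarrow> A \<inter> B) = 0" using p assms(3) by simp
  qed (use a b in \<open>auto simp: comp_def case_prod_unfold\<close>)
  also have "\<dots> = (\<Sum>A\<in>\<alpha>. \<Sum>B\<in>\<beta>. f (A \<inter> B))"
    by (simp add: sum.cartesian_product)
  finally show ?thesis .
qed

lemma sum_pull:
  assumes "\<alpha> \<in> fin_partitions M" "f {} = 0"
  shows "(\<Sum>D\<in>pull M T \<alpha>. f D) = (\<Sum>A\<in>\<alpha>. f (T -` A \<inter> space M))"
  unfolding pull_image
proof (subst sum.reindex_nontrivial)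
  note a = fin_partitionsD[OF assms(1)]
  fix A A' assume "A \<in> \<alpha>" "A' \<in> \<alpha>" "A \<noteq> A'" "T -` A \<inter> space M = T -` A' \<inter> space M"
  then have "T -` A \<inter> space M = {}" using a(3) by (auto dest: disjointD)
  then show "f (T -` A \<inter> space M) = 0" using assms(2) by simp
qed (use fin_partitionsD[OF assms(1)] in \<open>auto simp: comp_def\<close>)

section \<open>Entropy of partitions\<close>

lemma cond_pentropy_altdef:
  "cond_pentropy M \<alpha> \<beta> =
     (\<Sum>B\<in>\<beta>. \<Sum>A\<in>\<alpha>. - (measure M (A \<inter> B) * ln (measure M (A \<inter> B) / measure M B)))"
  unfolding cond_pentropy_def cond_meas_def sum_distrib_left
  by (intro sum.cong refl) auto

lemma cond_pentropy_space_space: "cond_pentropy M {space M} {space M} = 0"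
  by (simp add: cond_pentropy_altdef)

context finite_measure
begin

lemma measure_Int_le_right: "B \<in> sets M \<Longrightarrow> measure M (A \<inter> B) \<le> measure M B"
  by (rule finite_measure_mono) auto

lemma sum_measure_Int_partition:
  assumes "\<alpha> \<in> fin_partitions M" "B \<in> sets M"
  shows "(\<Sum>A\<in>\<alpha>. measure M (A \<inter> B)) = measure M B"
proof -
  note a = fin_partitionsD[OF assms(1)]
  have "(\<Union>A\<in>\<alpha>. A \<inter> B) = B" using a(4) sets.sets_into_space[OF assms(2)] by blast
  moreover have "measure M (\<Union>A\<in>\<alpha>. A \<inter> B) = (\<Sum>A\<in>\<alpha>. measure M (A \<inter> B))"
    using a assms(2) by (intro measure_finite_Union)
      (auto simp: disjoint_family_on_def emeasure_eq_measure dest: disjointD)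
  ultimately show ?thesis by simp
qed

lemma cond_pentropy_eq_pentropy_diff:
  assumes a: "\<alpha> \<in> fin_partitions M" and b: "\<beta> \<in> fin_partitions M"
  shows "cond_pentropy M \<alpha> \<beta> = pentropy M (pjoin \<alpha> \<beta>) - pentropy M \<beta>"
proof -
  let ?\<phi> = "\<lambda>x::real. - (x * ln x)"
  have split_ln: "- (x * ln (x / y)) = ?\<phi> x + x * ln y" if "0 \<le> x" "x \<le> y" for x y :: real
    using that by (cases "x = 0") (auto simp: ln_div algebra_simps)
  have "cond_pentropy M \<alpha> \<beta> =
     (\<Sum>B\<in>\<beta>. \<Sum>A\<in>\<alpha>. ?\<phi> (measure M (A \<inter> B)) + measure M (A \<inter> B) * ln (measure M B))"
    unfolding cond_pentropy_altdef
    using fin_partitionsD(2)[OF b] by (intro sum.cong refl split_ln measure_Int_le_right) auto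
  also have "\<dots> = (\<Sum>B\<in>\<beta>. (\<Sum>A\<in>\<alpha>. ?\<phi> (measure M (A \<inter> B))) - ?\<phi> (measure M B))"
  proof (intro sum.cong refl)
    fix B assume "B \<in> \<beta>"
    then have "B \<in> sets M" using fin_partitionsD(2)[OF b] by auto
    then have cell_sum: "(\<Sum>A\<in>\<alpha>. measure M (A \<inter> B) * ln (measure M B)) = measure M B * ln (measure M B)"
      by (simp add: sum_measure_Int_partition[OF a] flip: sum_distrib_right)
    show "(\<Sum>A\<in>\<alpha>. ?\<phi> (measure M (A \<inter> B)) + measure M (A \<inter> B) * ln (measure M B))
        = (\<Sum>A\<in>\<alpha>. ?\<phi> (measure M (A \<inter> B))) - ?\<phi> (measure M B)"
      unfolding sum.distrib cell_sum by simp
  qed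
  also have "\<dots> = (\<Sum>A\<in>\<alpha>. \<Sum>B\<in>\<beta>. ?\<phi> (measure M (A \<inter> B))) - pentropy M \<beta>"
    unfolding pentropy_def by (subst sum_subtractf, subst sum.swap, rule refl)
  also have "(\<Sum>A\<in>\<alpha>. \<Sum>B\<in>\<beta>. ?\<phi> (measure M (A \<inter> B))) = pentropy M (pjoin \<alpha> \<beta>)"
    unfolding pentropy_def by (rule sum_pjoin[OF a b, symmetric]) simp
  finally show ?thesis .
qed

lemma cond_pentropy_nonneg:
  assumes "\<beta> \<in> fin_partitions M"
  shows "0 \<le> cond_pentropy M \<alpha> \<beta>"
  unfolding cond_pentropy_altdef
proof (intro sum_nonneg)
  fix B A assume "B \<in> \<beta>"
  define x where "x = measure M (A \<inter> B)"
  define y where "y = measure M B"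
  have "0 \<le> x" "x \<le> y"
    unfolding x_def y_def using \<open>B \<in> \<beta>\<close> fin_partitionsD(2)[OF assms]
    by (auto intro: measure_Int_le_right)
  have "x * ln (x / y) \<le> 0"
  proof (cases "x = 0")
    case False
    with \<open>0 \<le> x\<close> \<open>x \<le> y\<close> have "ln (x / y) \<le> 0" by simp
    with \<open>0 \<le> x\<close> show ?thesis by (simp add: mult_nonneg_nonpos)
  qed simp
  then show "0 \<le> - (measure M (A \<inter> B) * ln (measure M (A \<inter> B) / measure M B))"
    unfolding x_def y_def by simp
qed

lemma pentropy_le_pentropy_add_cond_pentropy:
  assumes "\<alpha> \<in> fin_partitions M" "\<beta> \<in> fin_partitions M"
  shows "pentropy M \<alpha> \<le> pentropy M \<beta> + cond_pentropy M \<alpha> \<beta>"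
  using cond_pentropy_eq_pentropy_diff[OF assms] cond_pentropy_eq_pentropy_diff[OF assms(2,1)]
    cond_pentropy_nonneg[OF assms(1), of \<beta>] pjoin_commute[of \<alpha> \<beta>]
  by simp

lemma cond_pentropy_pjoin_le:
  assumes a: "\<alpha> \<in> fin_partitions M" and b: "\<beta> \<in> fin_partitions M" and c: "\<gamma> \<in> fin_partitions M"
  shows "cond_pentropy M \<alpha> (pjoin \<beta> \<gamma>) \<le> cond_pentropy M \<alpha> \<beta>"
proof -
  note A = fin_partitionsD[OF a] and B = fin_partitionsD[OF b] and C = fin_partitionsD[OF c]
  let ?\<psi> = "\<lambda>x y :: real. - (x * ln (x / y))"
  have "cond_pentropy M \<alpha> (pjoin \<beta> \<gamma>) =
      (\<Sum>B\<in>\<beta>. \<Sum>C\<in>\<gamma>. \<Sum>A\<in>\<alpha>. ?\<psi> (measure M (A \<inter> (B \<inter> C))) (measure M (B \<inter> C)))"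
    unfolding cond_pentropy_altdef by (rule sum_pjoin[OF b c]) simp
  also have "\<dots> = (\<Sum>B\<in>\<beta>. \<Sum>A\<in>\<alpha>. \<Sum>C\<in>\<gamma>. ?\<psi> (measure M (A \<inter> (B \<inter> C))) (measure M (B \<inter> C)))"
    by (rule sum.cong[OF refl], rule sum.swap)
  also have "\<dots> \<le> (\<Sum>B\<in>\<beta>. \<Sum>A\<in>\<alpha>. ?\<psi> (measure M (A \<inter> B)) (measure M B))"
  proof (intro sum_mono)
    fix B A assume "B \<in> \<beta>" "A \<in> \<alpha>"
    then have "B \<in> sets M" "A \<inter> B \<in> sets M" using A(2) B(2) by auto
    have "(\<Sum>C\<in>\<gamma>. measure M (A \<inter> (B \<inter> C))) = measure M (A \<inter> B)"
      using sum_measure_Int_partition[OF c \<open>A \<inter> B \<in> sets M\<close>] by (simp add: Int_ac)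
    moreover have "(\<Sum>C\<in>\<gamma>. measure M (B \<inter> C)) = measure M B"
      using sum_measure_Int_partition[OF c \<open>B \<in> sets M\<close>] by (simp add: Int_ac)
    moreover have "(\<Sum>C\<in>\<gamma>. measure M (A \<inter> (B \<inter> C))) *
          ln ((\<Sum>C\<in>\<gamma>. measure M (A \<inter> (B \<inter> C))) / (\<Sum>C\<in>\<gamma>. measure M (B \<inter> C)))
       \<le> (\<Sum>C\<in>\<gamma>. measure M (A \<inter> (B \<inter> C)) * ln (measure M (A \<inter> (B \<inter> C)) / measure M (B \<inter> C)))"
      using C(1,2) \<open>B \<in> sets M\<close>
      by (intro log_sum_inequality) (auto intro: measure_Int_le_right)
    ultimately show "(\<Sum>C\<in>\<gamma>. ?\<psi> (measure M (A \<inter> (B \<inter> C))) (measure M (B \<inter> C)))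
          \<le> ?\<psi> (measure M (A \<inter> B)) (measure M B)"
      by (simp add: sum_negf)
  qed
  also have "\<dots> = cond_pentropy M \<alpha> \<beta>" unfolding cond_pentropy_altdef ..
  finally show ?thesis .
qed

lemma cond_pentropy_pjoin_left_le:
  assumes a: "\<alpha> \<in> fin_partitions M" and a': "\<alpha>' \<in> fin_partitions M" and b: "\<beta> \<in> fin_partitions M"
  shows "cond_pentropy M (pjoin \<alpha> \<alpha>') \<beta> \<le> cond_pentropy M \<alpha> \<beta> + cond_pentropy M \<alpha>' \<beta>"
proof -
  have "pjoin (pjoin \<alpha> \<alpha>') \<beta> = pjoin \<alpha>' (pjoin \<alpha> \<beta>)"
    by (metis pjoin_assoc pjoin_commute)
  then have "cond_pentropy M (pjoin \<alpha> \<alpha>') \<beta> = cond_pentropy M \<alpha> \<beta> + cond_pentropy M \<alpha>' (pjoin \<alpha> \<beta>)"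
    using cond_pentropy_eq_pentropy_diff[OF pjoin_in_fin_partitions[OF a a'] b]
      cond_pentropy_eq_pentropy_diff[OF a b]
      cond_pentropy_eq_pentropy_diff[OF a' pjoin_in_fin_partitions[OF a b]]
    by simp
  also have "cond_pentropy M \<alpha>' (pjoin \<alpha> \<beta>) \<le> cond_pentropy M \<alpha>' \<beta>"
    using cond_pentropy_pjoin_le[OF a' b a] pjoin_commute[of \<alpha> \<beta>] by simp
  finally show ?thesis by simp
qed

lemma cond_pentropy_pjoin_pjoin_le:
  assumes "\<alpha> \<in> fin_partitions M" "\<alpha>' \<in> fin_partitions M"
    and "\<beta> \<in> fin_partitions M" "\<beta>' \<in> fin_partitions M"
  shows "cond_pentropy M (pjoin \<alpha> \<alpha>') (pjoin \<beta> \<beta>') \<le> cond_pentropy M \<alpha> \<beta> + cond_pentropy M \<alpha>' \<beta>'"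
proof -
  have "cond_pentropy M (pjoin \<alpha> \<alpha>') (pjoin \<beta> \<beta>')
      \<le> cond_pentropy M \<alpha> (pjoin \<beta> \<beta>') + cond_pentropy M \<alpha>' (pjoin \<beta>' \<beta>)"
    using cond_pentropy_pjoin_left_le[OF assms(1,2) pjoin_in_fin_partitions[OF assms(3,4)]]
    by (simp add: pjoin_commute[of \<beta>'])
  also have "\<dots> \<le> cond_pentropy M \<alpha> \<beta> + cond_pentropy M \<alpha>' \<beta>'"
    using assms by (intro add_mono cond_pentropy_pjoin_le)
  finally show ?thesis .
qed

lemma pentropy_pull:
  assumes a: "\<alpha> \<in> fin_partitions M" and T: "measure_preserving M T"
  shows "pentropy M (pull M T \<alpha>) = pentropy M \<alpha>"
proof -
  have "measure M (T -` A \<inter> space M) = measure M A" if "A \<in> \<alpha>" for A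
    using T fin_partitionsD(2)[OF a] that measure_distr[of T M M A]
    by (auto simp: measure_preserving_def)
  then show ?thesis
    unfolding pentropy_def by (simp add: sum_pull[OF a])
qed

lemma cond_pentropy_pull:
  assumes a: "\<alpha> \<in> fin_partitions M" and b: "\<beta> \<in> fin_partitions M" and T: "measure_preserving M T"
  shows "cond_pentropy M (pull M T \<alpha>) (pull M T \<beta>) = cond_pentropy M \<alpha> \<beta>"
proof -
  have "T \<in> measurable M M" using T by (simp add: measure_preserving_def)
  then show ?thesis
    using cond_pentropy_eq_pentropy_diff[OF pull_in_fin_partitions[OF a] pull_in_fin_partitions[OF b]]
      cond_pentropy_eq_pentropy_diff[OF a b]
      pentropy_pull[OF pjoin_in_fin_partitions[OF a b] T] pentropy_pull[OF b T]
    by (simp add: pull_pjoin)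
qed

lemma pjoin_list_pull_in_fin_partitions:
  assumes "\<alpha> \<in> fin_partitions M" "\<forall>g\<in>set gs. measure_preserving M (T g)"
  shows "pjoin_list M (map (\<lambda>g. pull M (T g) \<alpha>) gs) \<in> fin_partitions M"
  using assms
  by (auto simp: measure_preserving_def intro!: pjoin_list_in_fin_partitions pull_in_fin_partitions)

lemma cond_pentropy_pjoin_list_pull_le:
  assumes a: "\<alpha> \<in> fin_partitions M" and b: "\<beta> \<in> fin_partitions M"
    and T: "\<forall>g\<in>set gs. measure_preserving M (T g)"
  shows "cond_pentropy M (pjoin_list M (map (\<lambda>g. pull M (T g) \<alpha>) gs))
           (pjoin_list M (map (\<lambda>g. pull M (T g) \<beta>) gs))
         \<le> real (length gs) * cond_pentropy M \<alpha> \<beta>"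
  using T
proof (induction gs)
  case Nil
  then show ?case by (simp add: pjoin_list_def cond_pentropy_space_space)
next
  case (Cons g gs)
  have "T g \<in> measurable M M" using Cons.prems by (simp add: measure_preserving_def)
  have "cond_pentropy M (pjoin (pull M (T g) \<alpha>) (pjoin_list M (map (\<lambda>g. pull M (T g) \<alpha>) gs)))
          (pjoin (pull M (T g) \<beta>) (pjoin_list M (map (\<lambda>g. pull M (T g) \<beta>) gs)))
     \<le> cond_pentropy M (pull M (T g) \<alpha>) (pull M (T g) \<beta>)
       + cond_pentropy M (pjoin_list M (map (\<lambda>g. pull M (T g) \<alpha>) gs))
           (pjoin_list M (map (\<lambda>g. pull M (T g) \<beta>) gs))"
    using Cons.prems \<open>T g \<in> measurable M M\<close> a b
    by (intro cond_pentropy_pjoin_pjoin_le pull_in_fin_partitions pjoin_list_pull_in_fin_partitions)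
      auto
  also have "\<dots> \<le> cond_pentropy M \<alpha> \<beta> + real (length gs) * cond_pentropy M \<alpha> \<beta>"
    using Cons cond_pentropy_pull[OF a b] by simp
  finally show ?case by (simp add: pjoin_list_Cons algebra_simps)
qed

lemma pentropy_pjoin_list_pull_le:
  assumes "\<alpha> \<in> fin_partitions M" "\<beta> \<in> fin_partitions M"
    and "\<forall>g\<in>set gs. measure_preserving M (T g)"
  shows "pentropy M (pjoin_list M (map (\<lambda>g. pull M (T g) \<alpha>) gs))
         \<le> pentropy M (pjoin_list M (map (\<lambda>g. pull M (T g) \<beta>) gs))
           + real (length gs) * cond_pentropy M \<alpha> \<beta>"
proof -
  have "pentropy M (pjoin_list M (map (\<lambda>g. pull M (T g) \<alpha>) gs))
      \<le> pentropy M (pjoin_list M (map (\<lambda>g. pull M (T g) \<beta>) gs))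
        + cond_pentropy M (pjoin_list M (map (\<lambda>g. pull M (T g) \<alpha>) gs))
            (pjoin_list M (map (\<lambda>g. pull M (T g) \<beta>) gs))"
    using assms by (intro pentropy_le_pentropy_add_cond_pentropy pjoin_list_pull_in_fin_partitions)
  with cond_pentropy_pjoin_list_pull_le[OF assms] show ?thesis by linarith
qed

end

section \<open>Continuity of \<open>h\<^sup>*\<close>\<close>

definition sup_pentropy_pjoin_list ::
  "'a measure \<Rightarrow> ('g \<Rightarrow> 'a \<Rightarrow> 'a) \<Rightarrow> 'g set \<Rightarrow> 'a set set \<Rightarrow> nat \<Rightarrow> ereal" where
  "sup_pentropy_pjoin_list M act S \<alpha> n =
     (SUP \<alpha>s \<in> {\<alpha>s. length \<alpha>s = n \<and> set \<alpha>s \<subseteq> (\<lambda>g. pull M (act g) \<alpha>) ` S}.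
        ereal (pentropy M (pjoin_list M \<alpha>s)))"

lemma hstar_eq_limsup:
  "hstar M act S \<alpha> = limsup (\<lambda>n. ereal (1 / real n) * sup_pentropy_pjoin_list M act S \<alpha> n)"
  unfolding hstar_def sup_pentropy_pjoin_list_def ..

lemma rokhlin_commute: "rokhlin M \<alpha> \<beta> = rokhlin M \<beta> \<alpha>"
  unfolding rokhlin_def by simp

text \<open>Infinite limits must be allowed: for \<open>S = {}\<close> the suprema defining \<open>h\<^sup>*\<close> are empty
  and \<open>h\<^sup>* = -\<infinity>\<close>.\<close>

lemma LIMSEQ_ereal_sandwich:
  fixes x :: ereal and y :: "nat \<Rightarrow> ereal" and c :: "nat \<Rightarrow> real"
  assumes c: "c \<longlonglongrightarrow> 0" and upper: "\<And>n. y n \<le> x + ereal (c n)"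
    and lower: "\<And>n. x \<le> y n + ereal (c n)"
  shows "y \<longlonglongrightarrow> x"
proof (cases x)
  case (real r)
  have "\<bar>y n\<bar> \<noteq> \<infinity>" for n
    using upper[of n] lower[of n] real by (cases "y n") auto
  define s where "s n = real_of_ereal (y n)" for n
  have y: "y = (\<lambda>n. ereal (s n))"
    by (rule ext) (simp add: s_def ereal_real' \<open>\<And>n. \<bar>y n\<bar> \<noteq> \<infinity>\<close>)
  have bounds: "r - c n \<le> s n \<and> s n \<le> r + c n" for n
    using upper[of n] lower[of n] unfolding real y by (simp add: algebra_simps)
  have "s \<longlonglongrightarrow> r"
  proof (rule tendsto_sandwich)
    show "\<forall>\<^sub>F n in sequentially. r - c n \<le> s n" "\<forall>\<^sub>F n in sequentially. s n \<le> r + c n"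
      using bounds by simp_all
    show "(\<lambda>n. r - c n) \<longlonglongrightarrow> r" using tendsto_diff[OF tendsto_const c, of r] by simp
    show "(\<lambda>n. r + c n) \<longlonglongrightarrow> r" using tendsto_add[OF tendsto_const c, of r] by simp
  qed
  then show ?thesis unfolding real y by simp
next
  case PInf
  then have "y n = \<infinity>" for n using lower[of n] by (cases "y n") auto
  then have "y = (\<lambda>n. \<infinity>)" by (simp add: fun_eq_iff)
  then show ?thesis using PInf by simp
next
  case MInf
  then have "y n = - \<infinity>" for n using upper[of n] by (cases "y n") auto
  then have "y = (\<lambda>n. - \<infinity>)" by (simp add: fun_eq_iff)
  then show ?thesis using MInf by simp
qed

context finite_measure
begin

lemma sup_pentropy_pjoin_list_le:
  assumes a: "\<alpha> \<in> fin_partitions M" and b: "\<beta> \<in> fin_partitions M"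
    and act: "\<forall>g\<in>S. measure_preserving M (act g)"
  shows "sup_pentropy_pjoin_list M act S \<alpha> n
         \<le> sup_pentropy_pjoin_list M act S \<beta> n + ereal (real n * cond_pentropy M \<alpha> \<beta>)"
  unfolding sup_pentropy_pjoin_list_def
proof (rule SUP_least)
  fix \<alpha>s assume "\<alpha>s \<in> {\<alpha>s. length \<alpha>s = n \<and> set \<alpha>s \<subseteq> (\<lambda>g. pull M (act g) \<alpha>) ` S}"
  then have "length \<alpha>s = n" "\<alpha>s \<in> lists ((\<lambda>g. pull M (act g) \<alpha>) ` S)"
    by (auto simp: in_lists_conv_set)
  moreover obtain gs where "gs \<in> lists S" and \<alpha>s: "\<alpha>s = map (\<lambda>g. pull M (act g) \<alpha>) gs"
    using \<open>\<alpha>s \<in> lists _\<close> unfolding lists_image by blast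
  ultimately have gs: "set gs \<subseteq> S" "length gs = n"
    by (auto simp: lists_eq_set)
  let ?\<beta>s = "map (\<lambda>g. pull M (act g) \<beta>) gs"
  have "ereal (pentropy M (pjoin_list M \<alpha>s))
      \<le> ereal (pentropy M (pjoin_list M ?\<beta>s)) + ereal (real n * cond_pentropy M \<alpha> \<beta>)"
    using pentropy_pjoin_list_pull_le[OF a b, of gs act] gs \<alpha>s act by auto
  also have "\<dots> \<le> (SUP \<beta>s \<in> {\<beta>s. length \<beta>s = n \<and> set \<beta>s \<subseteq> (\<lambda>g. pull M (act g) \<beta>) ` S}.
        ereal (pentropy M (pjoin_list M \<beta>s))) + ereal (real n * cond_pentropy M \<alpha> \<beta>)"
    using gs by (intro add_right_mono SUP_upper) auto
  finally show "ereal (pentropy M (pjoin_list M \<alpha>s)) \<le> \<dots>" .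
qed

lemma hstar_le_hstar_add_cond_pentropy:
  assumes a: "\<alpha> \<in> fin_partitions M" and b: "\<beta> \<in> fin_partitions M"
    and act: "\<forall>g\<in>S. measure_preserving M (act g)"
  shows "hstar M act S \<alpha> \<le> hstar M act S \<beta> + ereal (cond_pentropy M \<alpha> \<beta>)"
proof -
  let ?H = "sup_pentropy_pjoin_list M act S"
  have "ereal (1 / real n) * ?H \<alpha> n \<le> ereal (1 / real n) * ?H \<beta> n + ereal (cond_pentropy M \<alpha> \<beta>)"
    for n
  proof (cases "n = 0")
    case True
    then show ?thesis using cond_pentropy_nonneg[OF b] by (simp flip: zero_ereal_def)
  next
    case False
    have "ereal (1 / real n) * ?H \<alpha> n
        \<le> ereal (1 / real n) * (?H \<beta> n + ereal (real n * cond_pentropy M \<alpha> \<beta>))"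
      using sup_pentropy_pjoin_list_le[OF a b act] by (intro ereal_mult_left_mono) auto
    also have "\<dots> = ereal (1 / real n) * ?H \<beta> n + ereal (1 / real n * (real n * cond_pentropy M \<alpha> \<beta>))"
      by (subst ereal_pos_distrib) auto
    also have "1 / real n * (real n * cond_pentropy M \<alpha> \<beta>) = cond_pentropy M \<alpha> \<beta>"
      using False by simp
    finally show ?thesis .
  qed
  then have "hstar M act S \<alpha>
      \<le> limsup (\<lambda>n. ereal (1 / real n) * ?H \<beta> n + ereal (cond_pentropy M \<alpha> \<beta>))"
    unfolding hstar_eq_limsup by (intro Limsup_mono always_eventually allI)
  also have "\<dots> = hstar M act S \<beta> + ereal (cond_pentropy M \<alpha> \<beta>)"
    unfolding hstar_eq_limsup by (rule Limsup_add_ereal_right) auto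
  finally show ?thesis .
qed

lemma hstar_le_hstar_add_rokhlin:
  assumes "\<alpha> \<in> fin_partitions M" "\<beta> \<in> fin_partitions M"
    and "\<forall>g\<in>S. measure_preserving M (act g)"
  shows "hstar M act S \<alpha> \<le> hstar M act S \<beta> + ereal (rokhlin M \<alpha> \<beta>)"
proof -
  have "hstar M act S \<alpha> \<le> hstar M act S \<beta> + ereal (cond_pentropy M \<alpha> \<beta>)"
    by (rule hstar_le_hstar_add_cond_pentropy[OF assms])
  also have "\<dots> \<le> hstar M act S \<beta> + ereal (rokhlin M \<alpha> \<beta>)"
    using cond_pentropy_nonneg[OF assms(1), of \<beta>] by (intro add_left_mono) (simp add: rokhlin_def)
  finally show ?thesis .
qed

end

theorem lemma4p4:
  fixes M :: "'a::polish_space measure"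
    and G :: "('g, 'b) monoid_scheme"
    and act :: "'g \<Rightarrow> 'a \<Rightarrow> 'a"
    and S :: "'g set"
  assumes "prob_space M"
    and "sets M = sets (borel :: 'a measure)"
    and "group G"
    and "group_action G (space M) act"
    and "\<And>g. g \<in> carrier G \<Longrightarrow> act g \<in> measurable M M"
    and "\<And>g. g \<in> carrier G \<Longrightarrow> distr M M (act g) = M"
    and "S \<subseteq> carrier G"
  shows "(\<forall>\<alpha> \<in> fin_partitions M. \<forall>\<beta> :: nat \<Rightarrow> 'a set set.
            (\<forall>n. \<beta> n \<in> fin_partitions M) \<and> (\<lambda>n. rokhlin M (\<beta> n) \<alpha>) \<longlonglongrightarrow> 0
            \<longrightarrow> (\<lambda>n. hstar M act S (\<beta> n)) \<longlonglongrightarrow> hstar M act S \<alpha>)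
       \<and> (\<forall>\<alpha> \<in> fin_partitions M. \<forall>\<beta> :: nat \<Rightarrow> 'a set set.
            (\<forall>n. \<beta> n \<in> fin_partitions M \<and> hstar M act S (\<beta> n) = 0)
            \<and> (\<lambda>n. rokhlin M (\<beta> n) \<alpha>) \<longlonglongrightarrow> 0
            \<longrightarrow> hstar M act S \<alpha> = 0)"
proof -
  interpret prob_space M by fact
  have act: "\<forall>g\<in>S. measure_preserving M (act g)"
    using assms(5-7) by (auto simp: measure_preserving_def)
  have continuous: "(\<lambda>n. hstar M act S (\<beta> n)) \<longlonglongrightarrow> hstar M act S \<alpha>"
    if \<alpha>: "\<alpha> \<in> fin_partitions M" and \<beta>: "\<forall>n. \<beta> n \<in> fin_partitions M"
      and lim: "(\<lambda>n. rokhlin M (\<beta> n) \<alpha>) \<longlonglongrightarrow> 0" for \<alpha> \<beta>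
  proof (rule LIMSEQ_ereal_sandwich[OF lim])
    show "hstar M act S (\<beta> n) \<le> hstar M act S \<alpha> + ereal (rokhlin M (\<beta> n) \<alpha>)" for n
      using \<alpha> \<beta> act by (intro hstar_le_hstar_add_rokhlin) auto
    show "hstar M act S \<alpha> \<le> hstar M act S (\<beta> n) + ereal (rokhlin M (\<beta> n) \<alpha>)" for n
      using \<alpha> \<beta> act hstar_le_hstar_add_rokhlin[of \<alpha> "\<beta> n"] by (simp add: rokhlin_commute)
  qed
  show ?thesis
  proof (intro conjI ballI allI impI)
    fix \<alpha> \<beta> assume "\<alpha> \<in> fin_partitions M" and "(\<forall>n. \<beta> n \<in> fin_partitions M \<and> hstar M act S (\<beta> n) = 0)
            \<and> (\<lambda>n. rokhlin M (\<beta> n) \<alpha>) \<longlonglongrightarrow> 0"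
    then have "(\<lambda>n. 0) \<longlonglongrightarrow> hstar M act S \<alpha>"
      using continuous[of \<alpha> \<beta>] by simp
    then show "hstar M act S \<alpha> = 0" by (simp add: LIMSEQ_const_iff)
  qed (use continuous in blast)
qed

end
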